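(* Let $n_1,n_2,n_3$ be integers with $3\le n_1,n_2\le n_3$ and let $W$ be a basic landmark system for $K(\mathbf{n})$. Then $W$ is a resolving set of $K(\mathbf{n})$ if and only if the landmark graph $\mathcal{G}(W)$ contains no bad $4$-cycle, no plain hex, and no shark teeth.
   Context: $K(\mathbf{n})=K_{n_1}\times K_{n_2}\times K_{n_3}$ is the direct product of complete graphs: its vertices are the triples $(x_1,x_2,x_3)$ with $1\le x_i\le n_i$, and two vertices are adjacent iff they differ in every coordinate. $d$ denotes graph distance. A set $W$ of vertices is resolving if for every two distinct vertices $x,y\notin W$ there is $w\in W$ with $d(x,w)\ne d(y,w)$. Landmark graph: for $W$ a set of vertices, let $W_{i,a}=\{w\in W: w_i=a\}$. The landmark graph $\mathcal{G}(W)$ is the hypergraph with vertex set $W$ whose hyperedges are the nonempty sets $W_{i,a}$ ($W_{i,a}$ has color $i$). A hyperedge with exactly two vertices is a stick, with at least three vertices poofy. Basic landmark system: $W$ such that (1) $W_{i,a}\neq\emptyset$ for all $i\in\{1,2,3\}$, $1\le a\le n_i$; (2) $|W_{i,a}|\ge 2$ for all such $i,a$; (3) $|W_{i,a}\cap W_{j,b}|\le 1$ whenever $i\ne j$. Bad $4$-cycle: distinct $w_1,w_2,w_3,w_4\in W$ and $\{i,j,k\}=\{1,2,3\}$ such that $\{w_1,w_2\}$ and $\{w_3,w_4\}$ are both hyperedges of color $i$, $w_2,w_3$ lie in a common hyperedge of color $j$, and $w_4,w_1$ lie in a common hyperedge of color $k$. Plain hex: distinct $w_1,\dots,w_6\in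 W$ and an ordering $(i,j,k)$ of $\{1,2,3\}$ such that $\{w_1,w_2\},\{w_4,w_5\}$ are hyperedges of color $i$, $\{w_2,w_3\},\{w_5,w_6\}$ are hyperedges of color $j$, and $\{w_3,w_4\},\{w_6,w_1\}$ are hyperedges of color $k$. Rainbow $2$-$2$-triangle: distinct $w_1,w_2,w_3\in W$ and $\{i,j,k\}=\{1,2,3\}$ such that $\{w_1,w_2\}$ is a hyperedge of color $i$, $\{w_2,w_3\}$ is a hyperedge of color $j$, and $w_1,w_3$ (the termini) lie in a common hyperedge of color $k$. Shark teeth: two rainbow $2$-$2$-triangles with the same colors $i,j,k$ on disjoint vertex sets whose four termini all belong to the same poofy hyperedge of color $k$. *)

theory Defs
  imports Main "HOL-Library.Extended_Nat"
begin

type_synonym vtx = "nat \<times> nat \<times> nat"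

definition coord :: "vtx \<Rightarrow> nat \<Rightarrow> nat" where
  "coord x i = (if i = 1 then fst x else if i = 2 then fst (snd x) else snd (snd x))"

definition sz :: "nat \<Rightarrow> nat \<Rightarrow> nat \<Rightarrow> nat \<Rightarrow> nat" where
  "sz n1 n2 n3 i = (if i = 1 then n1 else if i = 2 then n2 else n3)"

definition Kverts :: "nat \<Rightarrow> nat \<Rightarrow> nat \<Rightarrow> vtx set" where
  "Kverts n1 n2 n3 = {x. \<forall>i\<in>{1,2,3}. 1 \<le> coord x i \<and> coord x i \<le> sz n1 n2 n3 i}"

text \<open>Adjacency in the direct product: differ in every coordinate.\<close>
definition Kadj :: "vtx \<Rightarrow> vtx \<Rightarrow> bool" where
  "Kadj x y = (\<forall>i\<in>{1,2,3}. coord x i \<noteq> coord y i)"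

definition Kedges :: "nat \<Rightarrow> nat \<Rightarrow> nat \<Rightarrow> vtx rel" where
  "Kedges n1 n2 n3 = {(x, y). x \<in> Kverts n1 n2 n3 \<and> y \<in> Kverts n1 n2 n3 \<and> Kadj x y}"

definition Kdist :: "nat \<Rightarrow> nat \<Rightarrow> nat \<Rightarrow> vtx \<Rightarrow> vtx \<Rightarrow> enat" where
  "Kdist n1 n2 n3 x y = Inf {enat k | k. (x, y) \<in> Kedges n1 n2 n3 ^^ k}"

definition resolving :: "nat \<Rightarrow> nat \<Rightarrow> nat \<Rightarrow> vtx set \<Rightarrow> bool" where
  "resolving n1 n2 n3 W \<longleftrightarrow> W \<subseteq> Kverts n1 n2 n3 \<and>
     (\<forall>x\<in>Kverts n1 n2 n3 - W. \<forall>y\<in>Kverts n1 n2 n3 - W. x \<noteq> y \<longrightarrow>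
        (\<exists>w\<in>W. Kdist n1 n2 n3 x w \<noteq> Kdist n1 n2 n3 y w))"

definition Wsl :: "vtx set \<Rightarrow> nat \<Rightarrow> nat \<Rightarrow> vtx set" where
  "Wsl W i a = {w \<in> W. coord w i = a}"

text \<open>S is a hyperedge of colour i of the landmark graph G(W).\<close>
definition hedge :: "vtx set \<Rightarrow> nat \<Rightarrow> vtx set \<Rightarrow> bool" where
  "hedge W i S \<longleftrightarrow> i \<in> {1,2,3} \<and> (\<exists>a. S = Wsl W i a) \<and> S \<noteq> {}"

definition poofy :: "vtx set \<Rightarrow> nat \<Rightarrow> vtx set \<Rightarrow> bool" where
  "poofy W i S \<longleftrightarrow> hedge W i S \<and> card S \<ge> 3"

definition common :: "vtx set \<Rightarrow> nat \<Rightarrow> vtx \<Rightarrow> vtx \<Rightarrow> bool" where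
  "common W i u v \<longleftrightarrow> (\<exists>S. hedge W i S \<and> u \<in> S \<and> v \<in> S)"

definition basic_landmark_system :: "nat \<Rightarrow> nat \<Rightarrow> nat \<Rightarrow> vtx set \<Rightarrow> bool" where
  "basic_landmark_system n1 n2 n3 W \<longleftrightarrow> W \<subseteq> Kverts n1 n2 n3 \<and>
     (\<forall>i\<in>{1,2,3}. \<forall>a\<in>{1..sz n1 n2 n3 i}. Wsl W i a \<noteq> {}) \<and>
     (\<forall>i\<in>{1,2,3}. \<forall>a\<in>{1..sz n1 n2 n3 i}. card (Wsl W i a) \<ge> 2) \<and>
     (\<forall>i\<in>{1,2,3}. \<forall>j\<in>{1,2,3}. \<forall>a b. i \<noteq> j \<longrightarrow> card (Wsl W i a \<inter> Wsl W j b) \<le> 1)"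

definition distinct_colours :: "nat \<Rightarrow> nat \<Rightarrow> nat \<Rightarrow> bool" where
  "distinct_colours i j k \<longleftrightarrow> {i, j, k} = {1, 2, 3}"

definition has_bad_4cycle :: "vtx set \<Rightarrow> bool" where
  "has_bad_4cycle W \<longleftrightarrow> (\<exists>w1 w2 w3 w4 i j k.
     w1 \<in> W \<and> w2 \<in> W \<and> w3 \<in> W \<and> w4 \<in> W \<and> distinct [w1, w2, w3, w4] \<and>
     distinct_colours i j k \<and>
     hedge W i {w1, w2} \<and> hedge W i {w3, w4} \<and>
     common W j w2 w3 \<and> common W k w4 w1)"

definition has_plain_hex :: "vtx set \<Rightarrow> bool" where
  "has_plain_hex W \<longleftrightarrow> (\<exists>w1 w2 w3 w4 w5 w6 i j k.
     w1 \<in> W \<and> w2 \<in> W \<and> w3 \<in> W \<and> w4 \<in> W \<and> w5 \<in> W \<and> w6 \<in> W \<and>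
     distinct [w1, w2, w3, w4, w5, w6] \<and> distinct_colours i j k \<and>
     hedge W i {w1, w2} \<and> hedge W i {w4, w5} \<and>
     hedge W j {w2, w3} \<and> hedge W j {w5, w6} \<and>
     hedge W k {w3, w4} \<and> hedge W k {w6, w1})"

definition rainbow_tri :: "vtx set \<Rightarrow> vtx \<Rightarrow> vtx \<Rightarrow> vtx \<Rightarrow> nat \<Rightarrow> nat \<Rightarrow> nat \<Rightarrow> bool" where
  "rainbow_tri W w1 w2 w3 i j k \<longleftrightarrow>
     w1 \<in> W \<and> w2 \<in> W \<and> w3 \<in> W \<and> distinct [w1, w2, w3] \<and> distinct_colours i j k \<and>
     hedge W i {w1, w2} \<and> hedge W j {w2, w3} \<and> common W k w1 w3"

definition has_shark_teeth :: "vtx set \<Rightarrow> bool" where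
  "has_shark_teeth W \<longleftrightarrow> (\<exists>u1 u2 u3 v1 v2 v3 i j k S.
     rainbow_tri W u1 u2 u3 i j k \<and> rainbow_tri W v1 v2 v3 i j k \<and>
     {u1, u2, u3} \<inter> {v1, v2, v3} = {} \<and>
     poofy W k S \<and> u1 \<in> S \<and> u3 \<in> S \<and> v1 \<in> S \<and> v3 \<in> S)"

end

theory Submission
  imports Defs
begin

(*
  Since every factor has at least three vertices, any two vertices of K(n) have a common
  neighbour, so a non-landmark x is at distance 2 from exactly those landmarks with which it
  shares a coordinate.  Hence W fails to resolve iff two distinct non-landmarks x, y share a
  coordinate with the same landmarks.

  Each forbidden configuration produces such a pair, with coordinates read off from the
  configuration.  Conversely, let x, y be such a pair and x_i \<noteq> y_i.  Every landmark of
  W_{i,x_i} shares a coordinate with y, necessarily of colour j or k; condition (3) allows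
  only one landmark of each kind, so W_{i,x_i} is a stick {p, q} with p_j = y_j and q_k = y_k.
  According as x and y differ in one, two or three coordinates, these sticks close up into a
  bad 4-cycle, shark teeth around the slice W_{k,y_k}, or a plain hex.
*)

lemma distinct_colours_D:
  assumes "distinct_colours i j k"
  shows "i \<in> {1,2,3}" "j \<in> {1,2,3}" "k \<in> {1,2,3}" "i \<noteq> j" "i \<noteq> k" "j \<noteq> k"
proof -
  have e: "{i,j,k} = {1,2,3::nat}" using assms by (simp add: distinct_colours_def)
  then show "i \<in> {1,2,3}" "j \<in> {1,2,3}" "k \<in> {1,2,3}" by blast+
  have "card {i,j,k} = 3" using e by simp
  then show "i \<noteq> j" "i \<noteq> k" "j \<noteq> k"
    by (auto simp: card_insert_if split: if_splits)
qed

lemma distinct_colours_cases: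
  "distinct_colours i j k \<Longrightarrow> l \<in> {1,2,3} \<Longrightarrow> l = i \<or> l = j \<or> l = k"
  unfolding distinct_colours_def by blast

lemma distinct_colours_swap:
  "distinct_colours i j k \<Longrightarrow> distinct_colours i k j"
  "distinct_colours i j k \<Longrightarrow> distinct_colours j i k"
  unfolding distinct_colours_def by (simp_all add: insert_commute)

lemma coord_triple: "l \<in> {1,2,3} \<Longrightarrow> coord (f 1, f 2, f 3) l = f l"
  by (auto simp: coord_def)

lemma vtx_eqI:
  assumes "\<And>l. l \<in> {1,2,3} \<Longrightarrow> coord x l = coord y l"
  shows "x = y"
  using assms[of 1] assms[of 2] assms[of 3] by (simp add: coord_def prod_eq_iff)

lemma Kverts_coordI:
  "(\<And>l. l \<in> {1,2,3} \<Longrightarrow> \<exists>w\<in>Kverts n1 n2 n3. coord x l = coord w l) \<Longrightarrow> x \<in> Kverts n1 n2 n3"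
  unfolding Kverts_def by fastforce

lemma finite_Kverts: "finite (Kverts n1 n2 n3)"
proof (rule finite_subset)
  show "Kverts n1 n2 n3 \<subseteq> {1..n1} \<times> {1..n2} \<times> {1..n3}"
    unfolding Kverts_def coord_def sz_def by auto
qed simp

lemma obtain_Kverts_coords:
  assumes dc: "distinct_colours i j k"
    and "u \<in> Kverts n1 n2 n3" "v \<in> Kverts n1 n2 n3" "w \<in> Kverts n1 n2 n3"
  obtains x where "x \<in> Kverts n1 n2 n3"
    "coord x i = coord u i" "coord x j = coord v j" "coord x k = coord w k"
proof -
  define f where "f l = (if l = i then coord u i else if l = j then coord v j else coord w k)" for l
  have c: "coord (f 1, f 2, f 3) l = f l" if "l \<in> {1,2,3}" for l
    using that by (rule coord_triple)
  note col = distinct_colours_D[OF dc]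
  show ?thesis
  proof
    show "(f 1, f 2, f 3) \<in> Kverts n1 n2 n3"
      using assms distinct_colours_cases[OF dc] c by (intro Kverts_coordI) (auto simp: f_def)
  qed (use c col in \<open>simp_all add: f_def\<close>)
qed

section \<open>Distances and unresolved pairs\<close>

lemma Inf_relpow_lengths_eq:
  assumes "(x, y) \<in> E ^^ m" and "\<And>k. k < m \<Longrightarrow> (x, y) \<notin> E ^^ k"
  shows "Inf {enat k | k. (x, y) \<in> E ^^ k} = enat m"
proof (rule antisym)
  show "Inf {enat k | k. (x, y) \<in> E ^^ k} \<le> enat m"
    using assms(1) by (intro Inf_lower) blast
  show "enat m \<le> Inf {enat k | k. (x, y) \<in> E ^^ k}"
    using assms(2) by (intro Inf_greatest) (auto simp: not_less[symmetric])
qed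

lemma Kverts_common_neighbour:
  assumes "3 \<le> n1" "3 \<le> n2" "3 \<le> n3" and "x \<in> Kverts n1 n2 n3" "y \<in> Kverts n1 n2 n3"
  obtains z where "z \<in> Kverts n1 n2 n3" "Kadj x z" "Kadj z y"
proof -
  have "\<exists>c::nat. 1 \<le> c \<and> c \<le> 3 \<and> c \<noteq> coord x l \<and> c \<noteq> coord y l" for l
    by presburger
  then obtain f where f: "\<And>l. 1 \<le> f l \<and> f l \<le> 3 \<and> f l \<noteq> coord x l \<and> f l \<noteq> coord y l"
    by metis
  let ?z = "(f 1, f 2, f 3)"
  have z: "coord ?z l = f l" if "l \<in> {1,2,3}" for l
    using that by (rule coord_triple)
  show ?thesis
  proof
    show "?z \<in> Kverts n1 n2 n3"
      unfolding Kverts_def using f z assms(1-3) by (auto simp: sz_def intro: order.trans)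
    show "Kadj x ?z" "Kadj ?z y"
      unfolding Kadj_def using f z by (metis (lifting))+
  qed
qed

lemma Kdist_eq:
  assumes n: "3 \<le> n1" "3 \<le> n2" "3 \<le> n3"
    and x: "x \<in> Kverts n1 n2 n3" and y: "y \<in> Kverts n1 n2 n3" and "x \<noteq> y"
  shows "Kdist n1 n2 n3 x y = (if Kadj x y then 1 else 2)"
proof -
  let ?E = "Kedges n1 n2 n3"
  have not0: "(x, y) \<notin> ?E ^^ 0" using \<open>x \<noteq> y\<close> by simp
  have E1: "(x, y) \<in> ?E ^^ 1 \<longleftrightarrow> Kadj x y" using x y by (simp add: Kedges_def)
  show ?thesis
  proof (cases "Kadj x y")
    case True
    then have "Kdist n1 n2 n3 x y = enat 1"
      unfolding Kdist_def using E1 not0 by (intro Inf_relpow_lengths_eq) auto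
    then show ?thesis using True by (simp add: one_enat_def)
  next
    case False
    obtain z where "z \<in> Kverts n1 n2 n3" "Kadj x z" "Kadj z y"
      using Kverts_common_neighbour[OF n x y] .
    then have "(x, y) \<in> ?E O ?E"
      using x y by (auto simp: Kedges_def)
    then have "(x, y) \<in> ?E ^^ 2"
      by (simp add: numeral_2_eq_2)
    moreover have "k < 2 \<Longrightarrow> (x, y) \<notin> ?E ^^ k" for k
      using not0 E1 False by (cases k) auto
    ultimately have "Kdist n1 n2 n3 x y = enat 2"
      unfolding Kdist_def by (rule Inf_relpow_lengths_eq)
    then show ?thesis using False by (simp add: numeral_eq_enat)
  qed
qed

definition far_landmarks :: "vtx set \<Rightarrow> vtx \<Rightarrow> vtx set" where
  "far_landmarks W x = {w \<in> W. \<not> Kadj x w}"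

definition unresolved :: "nat \<Rightarrow> nat \<Rightarrow> nat \<Rightarrow> vtx set \<Rightarrow> vtx \<Rightarrow> vtx \<Rightarrow> bool" where
  "unresolved n1 n2 n3 W x y \<longleftrightarrow> x \<in> Kverts n1 n2 n3 - W \<and> y \<in> Kverts n1 n2 n3 - W \<and> x \<noteq> y \<and>
     far_landmarks W x = far_landmarks W y"

lemma unresolved_sym: "unresolved n1 n2 n3 W x y \<Longrightarrow> unresolved n1 n2 n3 W y x"
  unfolding unresolved_def by auto

lemma resolving_iff_no_unresolved:
  assumes n: "3 \<le> n1" "3 \<le> n2" "3 \<le> n3" and W: "W \<subseteq> Kverts n1 n2 n3"
  shows "resolving n1 n2 n3 W \<longleftrightarrow> \<not> (\<exists>x y. unresolved n1 n2 n3 W x y)"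
proof -
  have dist: "Kdist n1 n2 n3 x w = (if Kadj x w then 1 else 2)"
    if "x \<in> Kverts n1 n2 n3 - W" "w \<in> W" for x w
    using that W by (intro Kdist_eq[OF n]) auto
  have "Kdist n1 n2 n3 x w = Kdist n1 n2 n3 y w \<longleftrightarrow> (Kadj x w \<longleftrightarrow> Kadj y w)"
    if "x \<in> Kverts n1 n2 n3 - W" "y \<in> Kverts n1 n2 n3 - W" "w \<in> W" for x y w
    using dist[OF that(1,3)] dist[OF that(2,3)] by (simp add: numeral_eq_enat one_enat_def)
  then show ?thesis
    unfolding resolving_def unresolved_def far_landmarks_def using W by blast
qed

lemma mem_Wsl_iff [simp]: "w \<in> Wsl W i a \<longleftrightarrow> w \<in> W \<and> coord w i = a"
  by (simp add: Wsl_def)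

lemma far_landmarks_eq:
  assumes "distinct_colours i j k"
  shows "far_landmarks W x = Wsl W i (coord x i) \<union> Wsl W j (coord x j) \<union> Wsl W k (coord x k)"
  using distinct_colours_cases[OF assms] distinct_colours_D[OF assms]
  unfolding far_landmarks_def Kadj_def by fastforce

section \<open>Slices of a basic landmark system\<close>

lemma basic_subset_Kverts: "basic_landmark_system n1 n2 n3 W \<Longrightarrow> W \<subseteq> Kverts n1 n2 n3"
  by (simp add: basic_landmark_system_def)

lemma basic_finite: "basic_landmark_system n1 n2 n3 W \<Longrightarrow> finite W"
  using basic_subset_Kverts finite_Kverts by (rule finite_subset)

lemma basic_card_Wsl_ge2:
  assumes "basic_landmark_system n1 n2 n3 W" "i \<in> {1,2,3}" "x \<in> Kverts n1 n2 n3"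
  shows "2 \<le> card (Wsl W i (coord x i))"
  using assms unfolding basic_landmark_system_def Kverts_def by auto

lemma basic_eq_if_coords_eq:
  assumes basic: "basic_landmark_system n1 n2 n3 W"
    and ij: "i \<in> {1,2,3}" "j \<in> {1,2,3}" "i \<noteq> j" and "u \<in> W" "v \<in> W"
    and "coord u i = coord v i" "coord u j = coord v j"
  shows "u = v"
proof -
  let ?S = "Wsl W i (coord u i) \<inter> Wsl W j (coord u j)"
  have "card ?S \<le> 1" using basic ij unfolding basic_landmark_system_def by blast
  moreover have "finite ?S" using basic_finite[OF basic] by (simp add: Wsl_def)
  moreover have "u \<in> ?S" "v \<in> ?S" using assms by auto
  ultimately show ?thesis by (metis card_le_Suc0_iff_eq One_nat_def)
qed

lemma hedge_doubleton_iff: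
  "hedge W i {p, q} \<longleftrightarrow> i \<in> {1,2,3} \<and> Wsl W i (coord p i) = {p, q}"
  unfolding hedge_def by (metis insertI1 insert_not_empty mem_Wsl_iff)

lemma hedge_doubletonI: "i \<in> {1,2,3} \<Longrightarrow> Wsl W i a = {p, q} \<Longrightarrow> hedge W i {p, q}"
  unfolding hedge_def by auto

lemma Wsl_eq_doubletonD:
  "Wsl W i a = {p, q} \<Longrightarrow> p \<in> W \<and> q \<in> W \<and> coord p i = a \<and> coord q i = a"
  by (metis insertCI mem_Wsl_iff)

lemma common_iff:
  "common W i u v \<longleftrightarrow> i \<in> {1,2,3} \<and> u \<in> W \<and> v \<in> W \<and> coord u i = coord v i"
proof
  assume "i \<in> {1,2,3} \<and> u \<in> W \<and> v \<in> W \<and> coord u i = coord v i"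
  then show "common W i u v"
    unfolding common_def hedge_def by (intro exI[of _ "Wsl W i (coord u i)"]) auto
qed (auto simp: common_def hedge_def)

section \<open>Obstructions yield unresolved pairs\<close>

lemma bad_4cycle_unresolved:
  assumes basic: "basic_landmark_system n1 n2 n3 W" and "has_bad_4cycle W"
  obtains x y where "unresolved n1 n2 n3 W x y"
proof -
  obtain w1 w2 w3 w4 i j k where
    W: "w1 \<in> W" "w2 \<in> W" "w3 \<in> W" "w4 \<in> W" and dis: "distinct [w1, w2, w3, w4]" and
    dc: "distinct_colours i j k" and h: "hedge W i {w1, w2}" "hedge W i {w3, w4}" and
    c: "common W j w2 w3" "common W k w4 w1"
    using assms(2) unfolding has_bad_4cycle_def by blast
  note col = distinct_colours_D[OF dc]
  note eq = basic_eq_if_coords_eq[OF basic]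
  have K: "w \<in> W \<Longrightarrow> w \<in> Kverts n1 n2 n3" for w
    using basic_subset_Kverts[OF basic] by blast
  have s: "Wsl W i (coord w1 i) = {w1, w2}" "Wsl W i (coord w3 i) = {w3, w4}"
    using h by (simp_all add: hedge_doubleton_iff)
  have i: "coord w2 i = coord w1 i" "coord w4 i = coord w3 i"
    using Wsl_eq_doubletonD[OF s(1)] Wsl_eq_doubletonD[OF s(2)] by simp_all
  have jk: "coord w3 j = coord w2 j" "coord w4 k = coord w1 k"
    using c by (simp_all add: common_iff)
  obtain x where x: "x \<in> Kverts n1 n2 n3"
    "coord x i = coord w1 i" "coord x j = coord w2 j" "coord x k = coord w1 k"
    using obtain_Kverts_coords[OF dc K[OF W(1)] K[OF W(2)] K[OF W(1)]] .
  obtain y where y: "y \<in> Kverts n1 n2 n3"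
    "coord y i = coord w3 i" "coord y j = coord w2 j" "coord y k = coord w1 k"
    using obtain_Kverts_coords[OF dc K[OF W(3)] K[OF W(2)] K[OF W(1)]] .
  have "x \<notin> W"
  proof
    assume "x \<in> W"
    then have "x = w1 \<or> x = w2" using s(1) x(2) by (metis insertE mem_Wsl_iff singletonD)
    then show False
      using eq[OF col(1,2,4) W(1,2)] eq[OF col(1,3,5) W(1,2)] i x dis by auto
  qed
  moreover have "y \<notin> W"
  proof
    assume "y \<in> W"
    then have "y = w3 \<or> y = w4" using s(2) y(2) by (metis insertE mem_Wsl_iff singletonD)
    then show False
      using eq[OF col(1,2,4) W(3,4)] eq[OF col(1,3,5) W(3,4)] i jk y dis by auto
  qed
  moreover have "x \<noteq> y"
  proof
    assume "x = y"
    then have "w3 \<in> Wsl W i (coord w1 i)" using W x y by simp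
    then show False using s(1) dis by auto
  qed
  moreover have "far_landmarks W x = far_landmarks W y"
    unfolding far_landmarks_eq[OF dc] x y s using W i jk by auto
  ultimately show ?thesis using x y that unfolding unresolved_def by blast
qed

lemma plain_hex_unresolved:
  assumes basic: "basic_landmark_system n1 n2 n3 W" and "has_plain_hex W"
  obtains x y where "unresolved n1 n2 n3 W x y"
proof -
  obtain w1 w2 w3 w4 w5 w6 i j k where
    W: "w1 \<in> W" "w2 \<in> W" "w3 \<in> W" "w4 \<in> W" "w5 \<in> W" "w6 \<in> W" and
    dis: "distinct [w1, w2, w3, w4, w5, w6]" and dc: "distinct_colours i j k" and
    h: "hedge W i {w1, w2}" "hedge W i {w4, w5}" "hedge W j {w2, w3}"
       "hedge W j {w5, w6}" "hedge W k {w3, w4}" "hedge W k {w6, w1}"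
    using assms(2) unfolding has_plain_hex_def by blast
  have K: "w \<in> W \<Longrightarrow> w \<in> Kverts n1 n2 n3" for w
    using basic_subset_Kverts[OF basic] by blast
  have s: "Wsl W i (coord w1 i) = {w1, w2}" "Wsl W i (coord w4 i) = {w4, w5}"
    "Wsl W j (coord w2 j) = {w2, w3}" "Wsl W j (coord w5 j) = {w5, w6}"
    "Wsl W k (coord w3 k) = {w3, w4}" "Wsl W k (coord w6 k) = {w6, w1}"
    using h by (simp_all add: hedge_doubleton_iff)
  obtain x where x: "x \<in> Kverts n1 n2 n3"
    "coord x i = coord w1 i" "coord x j = coord w5 j" "coord x k = coord w3 k"
    using obtain_Kverts_coords[OF dc K[OF W(1)] K[OF W(5)] K[OF W(3)]] .
  obtain y where y: "y \<in> Kverts n1 n2 n3"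
    "coord y i = coord w4 i" "coord y j = coord w2 j" "coord y k = coord w6 k"
    using obtain_Kverts_coords[OF dc K[OF W(4)] K[OF W(2)] K[OF W(6)]] .
  have "x \<notin> W"
  proof
    assume "x \<in> W"
    then have "x \<in> {w1, w2}" "x \<in> {w5, w6}" using s(1,4) x by (metis mem_Wsl_iff)+
    then show False using dis by auto
  qed
  moreover have "y \<notin> W"
  proof
    assume "y \<in> W"
    then have "y \<in> {w4, w5}" "y \<in> {w2, w3}" using s(2,3) y by (metis mem_Wsl_iff)+
    then show False using dis by auto
  qed
  moreover have "x \<noteq> y"
  proof
    assume "x = y"
    then have "w4 \<in> Wsl W i (coord w1 i)" using W x y by simp
    then show False using s(1) dis by auto
  qed
  moreover have "far_landmarks W x = far_landmarks W y"
    unfolding far_landmarks_eq[OF dc] x y s by auto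
  ultimately show ?thesis using x y that unfolding unresolved_def by blast
qed

lemma shark_teeth_unresolved:
  assumes basic: "basic_landmark_system n1 n2 n3 W" and "has_shark_teeth W"
  obtains x y where "unresolved n1 n2 n3 W x y"
proof -
  obtain u1 u2 u3 v1 v2 v3 i j k S where
    u: "rainbow_tri W u1 u2 u3 i j k" and v: "rainbow_tri W v1 v2 v3 i j k" and
    dis: "{u1, u2, u3} \<inter> {v1, v2, v3} = {}" and
    S: "poofy W k S" "u1 \<in> S" "u3 \<in> S" "v1 \<in> S" "v3 \<in> S"
    using assms(2) unfolding has_shark_teeth_def by meson
  have W: "u1 \<in> W" "u2 \<in> W" "u3 \<in> W" "v1 \<in> W" "v2 \<in> W" "v3 \<in> W"
    and dc: "distinct_colours i j k"
    using u v unfolding rainbow_tri_def by auto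
  have K: "w \<in> W \<Longrightarrow> w \<in> Kverts n1 n2 n3" for w
    using basic_subset_Kverts[OF basic] by blast
  have s: "Wsl W i (coord u1 i) = {u1, u2}" "Wsl W i (coord v1 i) = {v1, v2}"
    "Wsl W j (coord u2 j) = {u2, u3}" "Wsl W j (coord v2 j) = {v2, v3}"
    using u v unfolding rainbow_tri_def by (simp_all add: hedge_doubleton_iff)
  have sk: "Wsl W k (coord u1 k) = S"
    using S unfolding poofy_def hedge_def by auto
  obtain x where x: "x \<in> Kverts n1 n2 n3"
    "coord x i = coord u1 i" "coord x j = coord v2 j" "coord x k = coord u1 k"
    using obtain_Kverts_coords[OF dc K[OF W(1)] K[OF W(5)] K[OF W(1)]] .
  obtain y where y: "y \<in> Kverts n1 n2 n3"
    "coord y i = coord v1 i" "coord y j = coord u2 j" "coord y k = coord u1 k"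
    using obtain_Kverts_coords[OF dc K[OF W(4)] K[OF W(2)] K[OF W(1)]] .
  have "x \<notin> W"
  proof
    assume "x \<in> W"
    then have "x \<in> {u1, u2}" "x \<in> {v2, v3}" using s(1,4) x by (metis mem_Wsl_iff)+
    then show False using dis by auto
  qed
  moreover have "y \<notin> W"
  proof
    assume "y \<in> W"
    then have "y \<in> {v1, v2}" "y \<in> {u2, u3}" using s(2,3) y by (metis mem_Wsl_iff)+
    then show False using dis by auto
  qed
  moreover have "x \<noteq> y"
  proof
    assume "x = y"
    then have "v1 \<in> Wsl W i (coord u1 i)" using W x y by simp
    then show False using s(1) dis by auto
  qed
  moreover have "far_landmarks W x = far_landmarks W y"
    unfolding far_landmarks_eq[OF dc] x y s sk using S(2-5) by auto
  ultimately show ?thesis using x y that unfolding unresolved_def by blast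
qed

section \<open>Unresolved pairs yield obstructions\<close>

lemma obtain_doubleton_split:
  assumes "finite A" "2 \<le> card A" "\<And>z. z \<in> A \<Longrightarrow> P z \<or> Q z"
    and "\<And>z z'. z \<in> A \<Longrightarrow> z' \<in> A \<Longrightarrow> P z \<Longrightarrow> P z' \<Longrightarrow> z = z'"
    and "\<And>z z'. z \<in> A \<Longrightarrow> z' \<in> A \<Longrightarrow> Q z \<Longrightarrow> Q z' \<Longrightarrow> z = z'"
  obtains p q where "A = {p, q}" "p \<noteq> q" "P p" "Q q"
proof -
  have not_le1: "\<not> (\<forall>z\<in>A. \<forall>z'\<in>A. z = z')"
    using assms(1,2) card_le_Suc0_iff_eq[of A] by auto
  obtain p where p: "p \<in> A" "P p" using assms(3,5) not_le1 by metis
  obtain q where q: "q \<in> A" "Q q" using assms(3,4) not_le1 by metis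
  have A: "A = {p, q}" using assms(3-5) p q by blast
  then have "p \<noteq> q" using not_le1 by auto
  with A p q that show ?thesis by blast
qed

lemma unresolved_Wsl_doubleton:
  assumes basic: "basic_landmark_system n1 n2 n3 W" and dc: "distinct_colours i j k"
    and unres: "unresolved n1 n2 n3 W x y" and xy: "coord x i \<noteq> coord y i"
  obtains p q where "Wsl W i (coord x i) = {p, q}" "p \<noteq> q"
    "coord p j = coord y j" "coord q k = coord y k"
proof -
  note col = distinct_colours_D[OF dc]
  note eq = basic_eq_if_coords_eq[OF basic]
  let ?A = "Wsl W i (coord x i)"
  have cover: "coord z j = coord y j \<or> coord z k = coord y k" if z: "z \<in> ?A" for z
  proof -
    have "z \<in> far_landmarks W x" using z unfolding far_landmarks_eq[OF dc] by blast
    then have "z \<in> far_landmarks W y" using unres unfolding unresolved_def by simp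
    then show ?thesis using z xy unfolding far_landmarks_eq[OF dc] by auto
  qed
  have fin: "finite ?A" using basic_finite[OF basic] by (simp add: Wsl_def)
  have card: "2 \<le> card ?A"
    using basic_card_Wsl_ge2[OF basic col(1)] unres unfolding unresolved_def by blast
  have uj: "z = z'" if "z \<in> ?A" "z' \<in> ?A" "coord z j = coord y j" "coord z' j = coord y j" for z z'
    using that eq[OF col(1,2,4), of z z'] by simp
  have uk: "z = z'" if "z \<in> ?A" "z' \<in> ?A" "coord z k = coord y k" "coord z' k = coord y k" for z z'
    using that eq[OF col(1,3,5), of z z'] by simp
  show ?thesis
    using obtain_doubleton_split[where P = "\<lambda>z. coord z j = coord y j"
        and Q = "\<lambda>z. coord z k = coord y k", OF fin card cover uj uk] that
    by blast
qed

(* Up to swapping j and k: x and y differ in colour i only, in i and j only, or everywhere. *)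
lemma obtain_differing_colour:
  assumes "x \<noteq> y"
  obtains i j k where "distinct_colours i j k" "coord x i \<noteq> coord y i"
    "coord x j = coord y j \<longrightarrow> coord x k = coord y k"
proof -
  have dc: "distinct_colours 1 2 3" "distinct_colours 1 3 2" "distinct_colours 2 1 3"
    "distinct_colours 2 3 1" "distinct_colours 3 1 2" "distinct_colours 3 2 1"
    by (simp_all add: distinct_colours_def insert_commute)
  have "\<not> (coord x 1 = coord y 1 \<and> coord x 2 = coord y 2 \<and> coord x 3 = coord y 3)"
    using assms vtx_eqI[of x y] by auto
  then show ?thesis using that dc by blast
qed

lemma unresolved_one_coord_bad_4cycle:
  assumes basic: "basic_landmark_system n1 n2 n3 W" and dc: "distinct_colours i j k"
    and unres: "unresolved n1 n2 n3 W x y" and di: "coord x i \<noteq> coord y i"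
    and ej: "coord x j = coord y j" and ek: "coord x k = coord y k"
  shows "has_bad_4cycle W"
proof -
  note col = distinct_colours_D[OF dc]
  obtain p q where pq: "Wsl W i (coord x i) = {p, q}" "p \<noteq> q"
    "coord p j = coord y j" "coord q k = coord y k"
    using unresolved_Wsl_doubleton[OF basic dc unres di] .
  obtain p' q' where pq': "Wsl W i (coord y i) = {p', q'}" "p' \<noteq> q'"
    "coord p' j = coord x j" "coord q' k = coord x k"
    using unresolved_Wsl_doubleton[OF basic dc unresolved_sym[OF unres] di[symmetric]] .
  have W: "p \<in> W" "q \<in> W" "p' \<in> W" "q' \<in> W"
    and i: "coord p i = coord x i" "coord q i = coord x i" "coord p' i = coord y i" "coord q' i = coord y i"
    using Wsl_eq_doubletonD[OF pq(1)] Wsl_eq_doubletonD[OF pq'(1)] by simp_all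
  have "hedge W i {p, q}" "hedge W i {q', p'}"
    using pq(1) pq'(1) i col(1) by (simp_all add: hedge_doubleton_iff insert_commute)
  moreover have "common W k q q'" "common W j p' p"
    using W pq pq' col ej ek by (simp_all add: common_iff)
  moreover have "distinct [p, q, q', p']" using pq pq' i di by auto
  ultimately show ?thesis
    unfolding has_bad_4cycle_def using W distinct_colours_swap(1)[OF dc] by blast
qed

lemma unresolved_rainbow_tri:
  assumes basic: "basic_landmark_system n1 n2 n3 W" and dc: "distinct_colours i j k"
    and unres: "unresolved n1 n2 n3 W x y" and di: "coord x i \<noteq> coord y i"
    and dj: "coord x j \<noteq> coord y j" and ek: "coord x k = coord y k"
  obtains p q r where "rainbow_tri W p q r i j k"
    "coord p i = coord x i" "coord p k = coord y k" "coord q i = coord x i"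
    "coord q j = coord y j" "coord r j = coord y j" "coord r k = coord y k"
proof -
  note col = distinct_colours_D[OF dc]
  note eq = basic_eq_if_coords_eq[OF basic]
  obtain q p where A: "Wsl W i (coord x i) = {q, p}" "q \<noteq> p"
    "coord q j = coord y j" "coord p k = coord y k"
    using unresolved_Wsl_doubleton[OF basic dc unres di] .
  obtain q' r where B: "Wsl W j (coord y j) = {q', r}" "q' \<noteq> r"
    "coord q' i = coord x i" "coord r k = coord x k"
    using unresolved_Wsl_doubleton[OF basic distinct_colours_swap(2)[OF dc]
        unresolved_sym[OF unres] dj[symmetric]] .
  note A' = Wsl_eq_doubletonD[OF A(1)] and B' = Wsl_eq_doubletonD[OF B(1)]
  have "q' = q" using eq[OF col(1,2,4)] A A' B B' by metis
  note B = B[unfolded this] and B' = B'[unfolded this]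
  have "coord p j \<noteq> coord y j" using eq[OF col(1,2,4)] A A' by metis
  then have "distinct [p, q, r]" using A B B' by auto
  then have "rainbow_tri W p q r i j k"
    unfolding rainbow_tri_def using A A' B B' dc col ek
    by (auto simp: hedge_doubleton_iff common_iff insert_commute)
  then show ?thesis using that A A' B B' ek by simp
qed

lemma unresolved_two_coords_shark_teeth:
  assumes basic: "basic_landmark_system n1 n2 n3 W" and dc: "distinct_colours i j k"
    and unres: "unresolved n1 n2 n3 W x y" and di: "coord x i \<noteq> coord y i"
    and dj: "coord x j \<noteq> coord y j" and ek: "coord x k = coord y k"
  shows "has_shark_teeth W"
proof -
  note col = distinct_colours_D[OF dc]
  obtain u1 u2 u3 where u: "rainbow_tri W u1 u2 u3 i j k"
    "coord u1 i = coord x i" "coord u1 k = coord y k" "coord u2 i = coord x i"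
    "coord u2 j = coord y j" "coord u3 j = coord y j" "coord u3 k = coord y k"
    using unresolved_rainbow_tri[OF basic dc unres di dj ek] .
  obtain v1 v2 v3 where v: "rainbow_tri W v1 v2 v3 i j k"
    "coord v1 i = coord y i" "coord v1 k = coord x k" "coord v2 i = coord y i"
    "coord v2 j = coord x j" "coord v3 j = coord x j" "coord v3 k = coord x k"
    using unresolved_rainbow_tri[OF basic dc unresolved_sym[OF unres] di[symmetric] dj[symmetric]
        ek[symmetric]] .
  have "x \<notin> W" "y \<notin> W" "u1 \<in> W" "v1 \<in> W" "u3 \<in> W" "v3 \<in> W"
    using unres u(1) v(1) unfolding unresolved_def rainbow_tri_def by auto
  \<comment> \<open>A landmark agreeing with \<open>x\<close> (or \<open>y\<close>) in all three coordinates would be \<open>x\<close> (or \<open>y\<close>).\<close>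
  then have "u1 \<noteq> v3" "u3 \<noteq> v1"
    using u v ek vtx_eqI distinct_colours_cases[OF dc] by metis+
  then have disj: "{u1, u2, u3} \<inter> {v1, v2, v3} = {}"
    using u v di dj by auto
  define S where "S = Wsl W k (coord y k)"
  have S: "u1 \<in> S" "u3 \<in> S" "v1 \<in> S" "v3 \<in> S"
    unfolding S_def using u v ek \<open>u1 \<in> W\<close> \<open>u3 \<in> W\<close> \<open>v1 \<in> W\<close> \<open>v3 \<in> W\<close> by auto
  have "card {u1, u3, v1} = 3" using u(1) disj unfolding rainbow_tri_def by auto
  moreover have "card {u1, u3, v1} \<le> card S"
    using S basic_finite[OF basic] unfolding S_def by (intro card_mono) (auto simp: Wsl_def)
  moreover have "hedge W k S" unfolding hedge_def S_def using col(3) S(1) S_def by blast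
  ultimately have "poofy W k S" unfolding poofy_def by simp
  then show ?thesis unfolding has_shark_teeth_def using u(1) v(1) disj S by blast
qed

lemma unresolved_three_coords_plain_hex:
  assumes basic: "basic_landmark_system n1 n2 n3 W" and dc: "distinct_colours i j k"
    and unres: "unresolved n1 n2 n3 W x y" and di: "coord x i \<noteq> coord y i"
    and dj: "coord x j \<noteq> coord y j" and dk: "coord x k \<noteq> coord y k"
  shows "has_plain_hex W"
proof -
  note col = distinct_colours_D[OF dc]
  note dc' = distinct_colours_swap(2)[OF dc]
  note dc'' = distinct_colours_swap(2)[OF distinct_colours_swap(1)[OF dc]]
  note eq = basic_eq_if_coords_eq[OF basic]
  note unres' = unresolved_sym[OF unres]
  obtain a1 b1 where S1: "Wsl W i (coord x i) = {a1, b1}" "a1 \<noteq> b1"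
    "coord a1 j = coord y j" "coord b1 k = coord y k"
    using unresolved_Wsl_doubleton[OF basic dc unres di] .
  obtain a2 b2 where S2: "Wsl W j (coord x j) = {a2, b2}" "a2 \<noteq> b2"
    "coord a2 i = coord y i" "coord b2 k = coord y k"
    using unresolved_Wsl_doubleton[OF basic dc' unres dj] .
  obtain a3 b3 where S3: "Wsl W k (coord x k) = {a3, b3}" "a3 \<noteq> b3"
    "coord a3 i = coord y i" "coord b3 j = coord y j"
    using unresolved_Wsl_doubleton[OF basic dc'' unres dk] .
  obtain c1 d1 where T1: "Wsl W i (coord y i) = {c1, d1}" "c1 \<noteq> d1"
    "coord c1 j = coord x j" "coord d1 k = coord x k"
    using unresolved_Wsl_doubleton[OF basic dc unres' di[symmetric]] .
  obtain c2 d2 where T2: "Wsl W j (coord y j) = {c2, d2}" "c2 \<noteq> d2"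
    "coord c2 i = coord x i" "coord d2 k = coord x k"
    using unresolved_Wsl_doubleton[OF basic dc' unres' dj[symmetric]] .
  obtain c3 d3 where T3: "Wsl W k (coord y k) = {c3, d3}" "c3 \<noteq> d3"
    "coord c3 i = coord x i" "coord d3 j = coord x j"
    using unresolved_Wsl_doubleton[OF basic dc'' unres' dk[symmetric]] .
  note S1' = Wsl_eq_doubletonD[OF S1(1)] and S2' = Wsl_eq_doubletonD[OF S2(1)]
    and S3' = Wsl_eq_doubletonD[OF S3(1)] and T1' = Wsl_eq_doubletonD[OF T1(1)]
    and T2' = Wsl_eq_doubletonD[OF T2(1)] and T3' = Wsl_eq_doubletonD[OF T3(1)]
  have e: "c1 = a2" "d1 = a3" "c2 = a1" "d2 = b3" "c3 = b1" "d3 = b2"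
    using eq[OF col(1,2,4)] T1 T1' S2 S2' eq[OF col(1,3,5)] T1 T1' S3 S3'
      eq[OF col(1,2,4)] T2 T2' S1 S1' eq[OF col(2,3,6)] T2 T2' S3 S3'
      eq[OF col(1,3,5)] T3 T3' S1 S1' eq[OF col(2,3,6)] T3 T3' S2 S2'
    by metis+
  note T1 = T1[unfolded e] and T2 = T2[unfolded e] and T3 = T3[unfolded e]
  have "hedge W i {b1, a1}" using hedge_doubletonI[OF col(1) S1(1)] by (simp add: insert_commute)
  moreover have "hedge W j {a1, b3}" using hedge_doubletonI[OF col(2) T2(1)] .
  moreover have "hedge W k {b3, a3}" using hedge_doubletonI[OF col(3) S3(1)] by (simp add: insert_commute)
  moreover have "hedge W i {a3, a2}" using hedge_doubletonI[OF col(1) T1(1)] by (simp add: insert_commute)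
  moreover have "hedge W j {a2, b2}" using hedge_doubletonI[OF col(2) S2(1)] .
  moreover have "hedge W k {b2, b1}" using hedge_doubletonI[OF col(3) T3(1)] by (simp add: insert_commute)
  moreover have "distinct [b1, a1, b3, a3, a2, b2]"
    using S1 S2 S3 T1 T2 T3 S1' S2' S3' di dj dk by auto
  ultimately show ?thesis
    unfolding has_plain_hex_def using S1' S2' S3' dc by meson
qed

lemma unresolved_obstruction:
  assumes basic: "basic_landmark_system n1 n2 n3 W" and unres: "unresolved n1 n2 n3 W x y"
  shows "has_bad_4cycle W \<or> has_plain_hex W \<or> has_shark_teeth W"
proof -
  have "x \<noteq> y" using unres unfolding unresolved_def by blast
  then obtain i j k where dc: "distinct_colours i j k" and di: "coord x i \<noteq> coord y i"
    and jk: "coord x j = coord y j \<longrightarrow> coord x k = coord y k"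
    by (rule obtain_differing_colour)
  consider "coord x j = coord y j" "coord x k = coord y k"
    | "coord x j \<noteq> coord y j" "coord x k = coord y k"
    | "coord x j \<noteq> coord y j" "coord x k \<noteq> coord y k"
    using jk by blast
  then show ?thesis
    using unresolved_one_coord_bad_4cycle[OF basic dc unres di]
      unresolved_two_coords_shark_teeth[OF basic dc unres di]
      unresolved_three_coords_plain_hex[OF basic dc unres di]
    by cases blast+
qed

theorem mainTheorem2:
  fixes n1 n2 n3 :: nat and W :: "vtx set"
  assumes "3 \<le> n1" and "3 \<le> n2" and "n1 \<le> n3" and "n2 \<le> n3"
    and "basic_landmark_system n1 n2 n3 W"
  shows "resolving n1 n2 n3 W \<longleftrightarrow>
    \<not> has_bad_4cycle W \<and> \<not> has_plain_hex W \<and> \<not> has_shark_teeth W"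
proof -
  \<comment> \<open>Of the size conditions only \<open>3 \<le> n\<^sub>i\<close> matters; the ordering is a normalisation.\<close>
  have "3 \<le> n3" using assms(1,3) by simp
  then have "resolving n1 n2 n3 W \<longleftrightarrow> \<not> (\<exists>x y. unresolved n1 n2 n3 W x y)"
    using resolving_iff_no_unresolved assms(1,2) basic_subset_Kverts[OF assms(5)] by blast
  then show ?thesis
    using bad_4cycle_unresolved[OF assms(5)] plain_hex_unresolved[OF assms(5)]
      shark_teeth_unresolved[OF assms(5)] unresolved_obstruction[OF assms(5)]
    by metis
qed

end
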